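(* Let $f\in C^\infty([0,\infty))$ be any solution of \[ f''(y)+\left(\frac{2}{y}-\frac{y}{2}\right)f'(y)-\frac{1}{y^2}\sin(2f(y))=0\ \ (y>0),\qquad f(0)=0,\qquad \lim_{y\to\infty}f(y)\ \text{exists and is finite}. \] Then $f^{(2k)}(0)=0$ for all $k\in\mathbb N_0$, and for each $k\in\mathbb N$ there exists a constant $C_k>0$ such that $\lvert f^{(k)}(y)\rvert\le C_k\,y^{-2-k}$ for all $y\ge 1$. *)

theory Defs
  imports Complex_Main
begin

text \<open>C-infinity on the closed half-line [0,infinity): D is the sequence of derivatives
  of D 0, where the derivative at y = 0 is one-sided (taken within {0..}).
  D k is then the k-th derivative of D 0 on [0,infinity), uniquely determined there.\<close>
definition smooth_derivs_halfline :: "(nat \<Rightarrow> real \<Rightarrow> real) \<Rightarrow> bool" where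
  "smooth_derivs_halfline D \<longleftrightarrow>
     (\<forall>k. \<forall>y\<ge>0. (D k has_real_derivative D (Suc k) y) (at y within {0..}))"

end

theory Submission
  imports Defs
begin

text \<open>Multiplied by \<open>y\<^sup>2\<close>, the equation reads \<open>y\<^sup>2 f'' + (2y - y\<^sup>3/2) f' = sin (2f)\<close> and can be
  differentiated \<open>n\<close> times up to \<open>y = 0\<close>. For even \<open>n\<close>, if the lower even derivatives of \<open>f\<close>
  vanish at 0, so do the odd derivatives of \<open>cos (2f)\<close>; hence the \<open>n\<close>-th derivative of
  \<open>sin (2f)\<close> at 0 is \<open>2 f^(n)(0)\<close>, and evaluating the differentiated equation at 0 leaves
  \<open>(n + 2)(n - 1) f^(n)(0) = 0\<close>.

  For the decay, the \<open>n\<close>-th derivative of \<open>f'' = (y/2 - 2/y) f' + sin (2f) / y\<^sup>2\<close> shows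
  inductively that \<open>g = f^(n+1)\<close> solves \<open>g' = (y/2 - 2/y) g + r\<close> with \<open>\<bar>r\<bar> \<le> M y^-(n+2)\<close>.
  As \<open>y\<^sup>2 e^(-y\<^sup>2/4)\<close> is an integrating factor, \<open>y\<^sup>2 e^(-y\<^sup>2/4) g - 2M e^(-y\<^sup>2/4) y^-(n+1)\<close> is
  nondecreasing on \<open>[1,\<infinity>)\<close>. Were it positive somewhere, \<open>g\<close> would stay above a positive
  constant from there on, so its antiderivative \<open>f^(n)\<close> would be unbounded, contradicting the
  limit of \<open>f\<close> (\<open>n = 0\<close>) or the decay of \<open>f^(n)\<close>. Hence \<open>g \<le> 2M y^-(n+3)\<close>, and
  symmetrically from below.\<close>

lemma smooth_derivs_halfline_DERIV_at:
  assumes "smooth_derivs_halfline D" and "y > 0"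
  shows "(D k has_real_derivative D (Suc k) y) (at y)"
proof -
  have "(D k has_real_derivative D (Suc k) y) (at y within {0..})"
    using assms unfolding smooth_derivs_halfline_def by simp
  then have "(D k has_real_derivative D (Suc k) y) (at y within {0<..})"
    by (rule has_field_derivative_subset) auto
  then show ?thesis
    using at_within_open[of y "{0<..}"] assms(2) by simp
qed

lemma derivative_sequence_vanishes:
  fixes G :: "nat \<Rightarrow> real \<Rightarrow> real"
  assumes "open S"
    and dG: "\<And>n x. x \<in> S \<Longrightarrow> (G n has_real_derivative G (Suc n) x) (at x)"
    and G0: "\<And>x. x \<in> S \<Longrightarrow> G 0 x = 0"
    and "y \<in> S"
  shows "G n y = 0"
  using \<open>y \<in> S\<close>
proof (induction n arbitrary: y)
  case 0
  then show ?case by (rule G0)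
next
  case (Suc n)
  have "((\<lambda>_. 0) has_real_derivative G (Suc n) y) (at y)"
    by (rule has_field_derivative_transform_within_open[OF dG[OF Suc.prems] \<open>open S\<close>])
       (use Suc in auto)
  then show ?case
    using DERIV_const DERIV_unique by blast
qed

lemma vanishes_at_0_by_continuity:
  fixes g :: "real \<Rightarrow> real"
  assumes "continuous (at 0 within {0..}) g" and "\<And>y. y > 0 \<Longrightarrow> g y = 0"
  shows "g 0 = 0"
proof -
  have "(g \<longlongrightarrow> g 0) (at_right 0)"
    using assms(1) unfolding continuous_within by (rule tendsto_within_subset) auto
  moreover have "(g \<longlongrightarrow> 0) (at_right 0)"
    by (rule tendsto_eventually) (auto simp: eventually_at_right_field assms(2) intro: exI[of _ 1])
  ultimately show ?thesis
    by (simp add: tendsto_unique[OF trivial_limit_at_right_real])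
qed


definition leibniz_prod ::
    "(nat \<Rightarrow> real \<Rightarrow> real) \<Rightarrow> (nat \<Rightarrow> real \<Rightarrow> real) \<Rightarrow> nat \<Rightarrow> real \<Rightarrow> real" where
  "leibniz_prod F G n y = (\<Sum>l\<le>n. of_nat (n choose l) * F l y * G (n - l) y)"

lemma leibniz_sum_Suc:
  fixes F G :: "nat \<Rightarrow> real"
  shows "(\<Sum>l\<le>n. of_nat (n choose l) * (F (Suc l) * G (n - l) + F l * G (Suc (n - l))))
       = (\<Sum>l\<le>Suc n. of_nat (Suc n choose l) * F l * G (Suc n - l))"
proof -
  have right: "(\<Sum>l\<le>Suc n. of_nat (Suc n choose l) * F l * G (Suc n - l))
     = F 0 * G (Suc n)
       + (\<Sum>l\<le>n. (of_nat (n choose l) + of_nat (n choose Suc l)) * F (Suc l) * G (n - l))"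
    by (subst sum.atMost_Suc_shift) simp
  have shifted: "(\<Sum>l\<le>n. of_nat (n choose l) * (F l * G (Suc (n - l))))
      = F 0 * G (Suc n) + (\<Sum>l\<le>n. of_nat (n choose Suc l) * (F (Suc l) * G (n - l)))"
  proof (cases n)
    case 0
    then show ?thesis by simp
  next
    case (Suc m)
    have "(\<Sum>l\<le>n. of_nat (n choose l) * (F l * G (Suc (n - l))))
        = F 0 * G (Suc n)
          + (\<Sum>l\<le>m. of_nat (n choose Suc l) * (F (Suc l) * G (Suc (n - Suc l))))"
      unfolding Suc by (subst sum.atMost_Suc_shift) simp
    also have "(\<Sum>l\<le>m. of_nat (n choose Suc l) * (F (Suc l) * G (Suc (n - Suc l))))
       = (\<Sum>l\<le>n. of_nat (n choose Suc l) * (F (Suc l) * G (n - l)))"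
      unfolding Suc by (simp add: Suc_diff_le binomial_eq_0)
    finally show ?thesis .
  qed
  show ?thesis
    unfolding right distrib_left sum.distrib shifted
    by (simp add: algebra_simps sum.distrib)
qed

lemma DERIV_leibniz_prod:
  assumes dF: "\<And>k. k \<le> n \<Longrightarrow> (F k has_real_derivative F (Suc k) x) (at x within S)"
    and dG: "\<And>k. k \<le> n \<Longrightarrow> (G k has_real_derivative G (Suc k) x) (at x within S)"
  shows "(leibniz_prod F G n has_real_derivative leibniz_prod F G (Suc n) x) (at x within S)"
proof -
  have "((\<lambda>y. \<Sum>l\<le>n. of_nat (n choose l) * F l y * G (n - l) y) has_real_derivative
          (\<Sum>l\<le>n. of_nat (n choose l) * (F (Suc l) x * G (n - l) x + F l x * G (Suc (n - l)) x)))
        (at x within S)"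
  proof (rule DERIV_sum)
    fix l assume "l \<in> {..n}"
    then have "((\<lambda>y. F l y * G (n - l) y) has_real_derivative
        F (Suc l) x * G (n - l) x + F l x * G (Suc (n - l)) x) (at x within S)"
      using DERIV_mult[OF dF dG[of "n - l"]] by (simp add: algebra_simps)
    then show "((\<lambda>y. of_nat (n choose l) * F l y * G (n - l) y) has_real_derivative
        of_nat (n choose l) * (F (Suc l) x * G (n - l) x + F l x * G (Suc (n - l)) x)) (at x within S)"
      by (subst mult.assoc) (rule DERIV_cmult)
  qed
  then show ?thesis
    using leibniz_sum_Suc[of n "\<lambda>l. F l x" "\<lambda>l. G l x"]
    by (simp add: leibniz_prod_def[abs_def] mult.assoc)
qed


fun sin_cos_derivs :: "(nat \<Rightarrow> real \<Rightarrow> real) \<Rightarrow> bool \<Rightarrow> nat \<Rightarrow> real \<Rightarrow> real" where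
  "sin_cos_derivs D b 0 y = (if b then sin (2 * D 0 y) else cos (2 * D 0 y))"
| "sin_cos_derivs D b (Suc j) y = (if b then 2 else -2) *
     (\<Sum>l\<le>j. of_nat (j choose l) * D (Suc l) y * sin_cos_derivs D (\<not> b) (j - l) y)"

lemma sin_cos_derivs_Suc_eq:
  "sin_cos_derivs D b (Suc j) =
     (\<lambda>y. (if b then 2 else -2) * leibniz_prod (\<lambda>l. D (Suc l)) (sin_cos_derivs D (\<not> b)) j y)"
  by (rule ext) (simp add: leibniz_prod_def)

lemma DERIV_sin_cos_derivs:
  assumes dD: "\<And>k. (D k has_real_derivative D (Suc k) y) (at y within S)"
  shows "(sin_cos_derivs D b k has_real_derivative sin_cos_derivs D b (Suc k) y) (at y within S)"
proof (induction k arbitrary: b rule: less_induct)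
  case (less k)
  show ?case
  proof (cases k)
    case 0
    show ?thesis
      unfolding 0 by (cases b) (auto intro!: derivative_eq_intros dD[of 0] simp: algebra_simps)
  next
    case (Suc j)
    have "(leibniz_prod (\<lambda>l. D (Suc l)) (sin_cos_derivs D (\<not> b)) j has_real_derivative
        leibniz_prod (\<lambda>l. D (Suc l)) (sin_cos_derivs D (\<not> b)) (Suc j) y) (at y within S)"
    proof (rule DERIV_leibniz_prod)
      fix l assume "l \<le> j"
      show "((\<lambda>l. D (Suc l)) l has_real_derivative (\<lambda>l. D (Suc l)) (Suc l) y) (at y within S)"
        using dD by simp
      show "(sin_cos_derivs D (\<not> b) l has_real_derivative sin_cos_derivs D (\<not> b) (Suc l) y)
          (at y within S)"
        by (rule less.IH) (use Suc \<open>l \<le> j\<close> in linarith)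
    qed
    from DERIV_cmult[OF this] show ?thesis
      unfolding Suc sin_cos_derivs_Suc_eq .
  qed
qed

lemma sin_cos_derivs_at_0_vanish:
  assumes "even n" and D: "\<And>i. i < n \<Longrightarrow> even i \<Longrightarrow> D i 0 = 0"
  shows "i < n \<Longrightarrow> (b \<longleftrightarrow> even i) \<Longrightarrow> sin_cos_derivs D b i 0 = 0"
proof (induction i arbitrary: b rule: less_induct)
  case (less i)
  show ?case
  proof (cases i)
    case 0
    then show ?thesis using less.prems D[of 0] by simp
  next
    case (Suc j)
    have "of_nat (j choose l) * D (Suc l) 0 * sin_cos_derivs D (\<not> b) (j - l) 0 = 0"
      if "l \<le> j" for l
    proof (cases "even l")
      case True
      then have "sin_cos_derivs D (\<not> b) (j - l) 0 = 0"
        using less.IH[of "j - l"] less.prems Suc that by auto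
      then show ?thesis by simp
    next
      case False
      then have "D (Suc l) 0 = 0"
        using D[of "Suc l"] less.prems Suc that by auto
      then show ?thesis by simp
    qed
    then have "(\<Sum>l\<le>j. of_nat (j choose l) * D (Suc l) 0 * sin_cos_derivs D (\<not> b) (j - l) 0) = 0"
      by (intro sum.neutral) simp
    then show ?thesis
      unfolding Suc sin_cos_derivs.simps by simp
  qed
qed

lemma sin_derivs_at_0:
  assumes "even n" and "n > 0" and D: "\<And>i. i < n \<Longrightarrow> even i \<Longrightarrow> D i 0 = 0"
  shows "sin_cos_derivs D True n 0 = 2 * D n 0"
proof -
  have "n \<ge> 2" using assms(1,2) by presburger
  then obtain j where n: "n = Suc (Suc j)" by (metis add_2_eq_Suc le_Suc_ex)
  have "of_nat (Suc j choose l) * D (Suc l) 0 * sin_cos_derivs D False (Suc j - l) 0 = 0"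
    if "l \<le> j" for l
  proof (cases "even l")
    case True
    then have "sin_cos_derivs D False (Suc j - l) 0 = 0"
      using sin_cos_derivs_at_0_vanish[of n D "Suc j - l" False, OF assms(1) D] assms(1) n that by auto
    then show ?thesis by simp
  next
    case False
    then have "D (Suc l) 0 = 0"
      using D[of "Suc l"] n that by auto
    then show ?thesis by simp
  qed
  then have "(\<Sum>l\<le>j. of_nat (Suc j choose l) * D (Suc l) 0 * sin_cos_derivs D False (Suc j - l) 0) = 0"
    by (intro sum.neutral) simp
  then show ?thesis
    using D[of 0] assms(2) unfolding n by (simp add: sum.atMost_Suc)
qed


subsection \<open>Even derivatives at the origin\<close>

text \<open>The derivatives of the coefficients of \<open>y\<^sup>2\<close> times the equation,
  \<open>y\<^sup>2 f'' + (2y - y\<^sup>3/2) f' - sin (2 f) = 0\<close>.\<close>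

definition sq_coeff_derivs :: "nat \<Rightarrow> real \<Rightarrow> real" where
  "sq_coeff_derivs l y = (if l = 0 then y^2 else if l = 1 then 2*y else if l = 2 then 2 else 0)"

definition cubic_coeff_derivs :: "nat \<Rightarrow> real \<Rightarrow> real" where
  "cubic_coeff_derivs l y = (if l = 0 then 2*y - y^3/2 else if l = 1 then 2 - 3*y^2/2
      else if l = 2 then -3*y else if l = 3 then -3 else 0)"

definition scaled_ode_derivs :: "(nat \<Rightarrow> real \<Rightarrow> real) \<Rightarrow> nat \<Rightarrow> real \<Rightarrow> real" where
  "scaled_ode_derivs D n y = leibniz_prod sq_coeff_derivs (\<lambda>k. D (k + 2)) n y
     + leibniz_prod cubic_coeff_derivs (\<lambda>k. D (k + 1)) n y - sin_cos_derivs D True n y"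

lemma DERIV_sq_coeff_derivs:
  "(sq_coeff_derivs l has_real_derivative sq_coeff_derivs (Suc l) y) (at y within S)"
  unfolding sq_coeff_derivs_def
  by (cases "l = 0"; cases "l = 1"; cases "l = 2") (auto intro!: derivative_eq_intros)

lemma DERIV_cubic_coeff_derivs:
  "(cubic_coeff_derivs l has_real_derivative cubic_coeff_derivs (Suc l) y) (at y within S)"
  unfolding cubic_coeff_derivs_def
  by (cases "l = 0"; cases "l = 1"; cases "l = 2"; cases "l = 3")
     (auto intro!: derivative_eq_intros simp: power2_eq_square)

lemma DERIV_scaled_ode_derivs:
  assumes dD: "\<And>k. (D k has_real_derivative D (Suc k) y) (at y within S)"
  shows "(scaled_ode_derivs D n has_real_derivative scaled_ode_derivs D (Suc n) y) (at y within S)"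
proof -
  have sq: "(leibniz_prod sq_coeff_derivs (\<lambda>k. D (k + 2)) n has_real_derivative
      leibniz_prod sq_coeff_derivs (\<lambda>k. D (k + 2)) (Suc n) y) (at y within S)"
    using DERIV_leibniz_prod[of n sq_coeff_derivs y S "\<lambda>k. D (k + 2)"] DERIV_sq_coeff_derivs dD
    by simp
  have cubic: "(leibniz_prod cubic_coeff_derivs (\<lambda>k. D (k + 1)) n has_real_derivative
      leibniz_prod cubic_coeff_derivs (\<lambda>k. D (k + 1)) (Suc n) y) (at y within S)"
    using DERIV_leibniz_prod[of n cubic_coeff_derivs y S "\<lambda>k. D (k + 1)"] DERIV_cubic_coeff_derivs dD
    by simp
  show ?thesis
    unfolding scaled_ode_derivs_def[abs_def]
    by (rule DERIV_diff[OF DERIV_add[OF sq cubic] DERIV_sin_cos_derivs[of D y S, OF dD]])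
qed

lemma scaled_ode_derivs_at_0:
  assumes smooth: "smooth_derivs_halfline D" and D0: "D 0 = f"
    and ode: "\<And>y. y > 0 \<Longrightarrow> D 2 y + (2 / y - y / 2) * D 1 y - sin (2 * f y) / y ^ 2 = 0"
  shows "scaled_ode_derivs D n 0 = 0"
proof (rule vanishes_at_0_by_continuity)
  have "(scaled_ode_derivs D n has_real_derivative scaled_ode_derivs D (Suc n) 0) (at 0 within {0..})"
    by (rule DERIV_scaled_ode_derivs) (use smooth in \<open>simp add: smooth_derivs_halfline_def\<close>)
  then show "continuous (at 0 within {0..}) (scaled_ode_derivs D n)"
    by (rule DERIV_continuous)
next
  fix y :: real assume "y > 0"
  show "scaled_ode_derivs D n y = 0"
  proof (rule derivative_sequence_vanishes[of "{0<..}" "scaled_ode_derivs D"])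
    show "(scaled_ode_derivs D k has_real_derivative scaled_ode_derivs D (Suc k) x) (at x)"
      if "x \<in> {0<..}" for k x
      using that by (intro DERIV_scaled_ode_derivs smooth_derivs_halfline_DERIV_at[OF smooth]) simp
    show "scaled_ode_derivs D 0 x = 0" if "x \<in> {0<..}" for x
    proof -
      have x: "x > 0" using that by simp
      have "scaled_ode_derivs D 0 x
          = x^2 * (D 2 x + (2 / x - x / 2) * D 1 x - sin (2 * f x) / x ^ 2)"
        using x D0 by (simp add: scaled_ode_derivs_def leibniz_prod_def sq_coeff_derivs_def
            cubic_coeff_derivs_def numeral_2_eq_2 field_simps power2_eq_square power3_eq_cube)
      then show ?thesis
        using ode[OF x] by simp
    qed
  qed (use \<open>y > 0\<close> in auto)
qed

lemma even_derivs_at_0_vanish: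
  assumes smooth: "smooth_derivs_halfline D" and D0: "D 0 = f"
    and ode: "\<And>y. y > 0 \<Longrightarrow> D 2 y + (2 / y - y / 2) * D 1 y - sin (2 * f y) / y ^ 2 = 0"
    and init: "f 0 = 0"
  shows "even n \<Longrightarrow> D n 0 = 0"
proof (induction n rule: less_induct)
  case (less n)
  show ?case
  proof (cases "n = 0")
    case True
    then show ?thesis using D0 init by simp
  next
    case False
    then have n2: "n \<ge> 2" using less.prems by presburger
    have lower: "\<And>i. i < n \<Longrightarrow> even i \<Longrightarrow> D i 0 = 0" using less.IH by blast
    have sq: "leibniz_prod sq_coeff_derivs (\<lambda>k. D (k + 2)) n 0
        = (\<Sum>l\<le>n. if l = 2 then of_nat (n choose 2) * 2 * D n 0 else 0)"
      unfolding leibniz_prod_def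
      by (rule sum.cong) (use n2 in \<open>auto simp: sq_coeff_derivs_def Suc_diff_Suc numeral_2_eq_2\<close>)
    have "D (n - 2) 0 = 0" using lower[of "n - 2"] n2 less.prems by auto
    then have cubic: "leibniz_prod cubic_coeff_derivs (\<lambda>k. D (k + 1)) n 0
        = (\<Sum>l\<le>n. if l = 1 then of_nat n * 2 * D n 0 else 0)"
      unfolding leibniz_prod_def
      by (intro sum.cong refl)
         (auto simp: cubic_coeff_derivs_def numeral_3_eq_3 numeral_2_eq_2 Suc_diff_Suc)
    have "0 = of_nat (n choose 2) * 2 * D n 0 + of_nat n * 2 * D n 0 - 2 * D n 0"
      using scaled_ode_derivs_at_0[OF smooth D0 ode, of n] n2
        sin_derivs_at_0[of n D, OF less.prems _ lower]
      unfolding scaled_ode_derivs_def sq cubic by simp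
    then have "D n 0 * (of_nat (n choose 2) * 2 + (2 * of_nat n - 2)) = 0"
      by (simp add: algebra_simps)
    moreover have "of_nat (n choose 2) * 2 + (2 * of_nat n - 2) > (0::real)"
      using n2 by simp
    ultimately show ?thesis by simp
  qed
qed


subsection \<open>Polynomial decay\<close>

definition decays :: "(real \<Rightarrow> real) \<Rightarrow> nat \<Rightarrow> bool" where
  "decays g n \<longleftrightarrow> (\<exists>C. \<forall>y\<ge>1. \<bar>g y\<bar> \<le> C / y^n)"

lemma decaysE:
  assumes "decays g n"
  obtains C where "C \<ge> 0" "\<And>y. y \<ge> 1 \<Longrightarrow> \<bar>g y\<bar> \<le> C / y^n"
proof -
  obtain C where C: "\<And>y. y \<ge> 1 \<Longrightarrow> \<bar>g y\<bar> \<le> C / y^n"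
    using assms unfolding decays_def by blast
  moreover have "C \<ge> 0" using C[of 1] by simp
  ultimately show ?thesis using that by blast
qed

lemma decays_mult:
  assumes "decays g a" "decays h b"
  shows "decays (\<lambda>y. g y * h y) (a + b)"
proof -
  obtain C1 where C1: "C1 \<ge> 0" "\<And>y. y \<ge> 1 \<Longrightarrow> \<bar>g y\<bar> \<le> C1 / y^a"
    using assms(1) by (metis decaysE)
  obtain C2 where C2: "C2 \<ge> 0" "\<And>y. y \<ge> 1 \<Longrightarrow> \<bar>h y\<bar> \<le> C2 / y^b"
    using assms(2) by (metis decaysE)
  have "\<bar>g y * h y\<bar> \<le> (C1 * C2) / y^(a + b)" if y: "y \<ge> 1" for y
  proof -
    have "\<bar>g y * h y\<bar> \<le> (C1 / y^a) * (C2 / y^b)"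
      unfolding abs_mult using C1(2)[OF y] C2(2)[OF y] by (intro mult_mono) auto
    also have "\<dots> = (C1 * C2) / y^(a + b)" by (simp add: power_add)
    finally show ?thesis .
  qed
  then show ?thesis unfolding decays_def by blast
qed

lemma decays_mono:
  assumes "decays g a" "b \<le> a"
  shows "decays g b"
proof -
  obtain C where C: "C \<ge> 0" "\<And>y. y \<ge> 1 \<Longrightarrow> \<bar>g y\<bar> \<le> C / y^a"
    using assms(1) by (metis decaysE)
  have "\<bar>g y\<bar> \<le> C / y^b" if y: "y \<ge> 1" for y
  proof -
    have "C / y^a \<le> C / y^b"
      using C(1) y assms(2) by (intro divide_left_mono power_increasing) auto
    then show ?thesis using C(2)[OF y] by linarith
  qed
  then show ?thesis unfolding decays_def by blast
qed

lemma decays_add: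
  assumes "decays g n" "decays h n"
  shows "decays (\<lambda>y. g y + h y) n"
proof -
  obtain C1 where C1: "\<And>y. y \<ge> 1 \<Longrightarrow> \<bar>g y\<bar> \<le> C1 / y^n"
    using assms(1) unfolding decays_def by blast
  obtain C2 where C2: "\<And>y. y \<ge> 1 \<Longrightarrow> \<bar>h y\<bar> \<le> C2 / y^n"
    using assms(2) unfolding decays_def by blast
  have "\<bar>g y + h y\<bar> \<le> (C1 + C2) / y^n" if "y \<ge> 1" for y
    using C1[OF that] C2[OF that] by (simp add: add_divide_distrib abs_triangle_ineq[THEN order_trans])
  then show ?thesis unfolding decays_def by blast
qed

lemma decays_sum:
  assumes "finite I" "\<And>i. i \<in> I \<Longrightarrow> decays (g i) n"
  shows "decays (\<lambda>y. \<Sum>i\<in>I. g i y) n"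
  using assms
proof (induction I rule: finite_induct)
  case empty
  show ?case
    unfolding decays_def by (intro exI[of _ 0]) simp
next
  case (insert i I)
  then show ?case by (simp add: decays_add)
qed

lemma decays_cmult:
  assumes "decays g n"
  shows "decays (\<lambda>y. c * g y) n"
proof -
  obtain C where C: "C \<ge> 0" "\<And>y. y \<ge> 1 \<Longrightarrow> \<bar>g y\<bar> \<le> C / y^n"
    using assms by (metis decaysE)
  have "\<bar>c * g y\<bar> \<le> (\<bar>c\<bar> * C) / y^n" if "y \<ge> 1" for y
    using mult_left_mono[OF C(2)[OF that] abs_ge_zero[of c]] by (simp add: abs_mult)
  then show ?thesis unfolding decays_def by blast
qed

lemma decays_imp_bounded:
  assumes "decays g n"
  shows "\<exists>B. \<forall>y\<ge>1. \<bar>g y\<bar> \<le> B"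
  using decays_mono[OF assms, of 0] unfolding decays_def by auto

lemma decays_imp_powr_bound:
  assumes "decays g n"
  shows "\<exists>C>0. \<forall>y\<ge>1. \<bar>g y\<bar> \<le> C * y powr (- real n)"
proof -
  obtain C where C: "C \<ge> 0" "\<And>y. y \<ge> 1 \<Longrightarrow> \<bar>g y\<bar> \<le> C / y^n"
    using assms by (metis decaysE)
  have "\<bar>g y\<bar> \<le> (C + 1) * y powr (- real n)" if y: "y \<ge> 1" for y
  proof -
    have "C / y^n \<le> (C + 1) / y^n" using y by (simp add: divide_right_mono)
    also have "\<dots> = (C + 1) * y powr (- real n)"
      using y by (simp add: powr_minus powr_realpow divide_inverse)
    finally show ?thesis using C(2)[OF y] by linarith
  qed
  moreover have "C + 1 > 0" using C(1) by simp
  ultimately show ?thesis by blast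
qed

lemma decays_leibniz_prod:
  assumes "\<And>l. l \<le> n \<Longrightarrow> decays (F l) (a l)"
    and "\<And>l. l \<le> n \<Longrightarrow> decays (G (n - l)) (b l)"
    and "\<And>l. l \<le> n \<Longrightarrow> N \<le> a l + b l"
  shows "decays (leibniz_prod F G n) N"
proof -
  have "decays (\<lambda>y. of_nat (n choose l) * F l y * G (n - l) y) N" if "l \<le> n" for l
    using decays_cmult[OF decays_mono[OF decays_mult[OF assms(1,2)] assms(3)]] that
    by (simp add: mult.assoc)
  then show ?thesis
    unfolding leibniz_prod_def[abs_def] by (intro decays_sum) auto
qed


definition inv_pow_derivs :: "nat \<Rightarrow> nat \<Rightarrow> real \<Rightarrow> real" where
  "inv_pow_derivs m k y = (-1)^k * pochhammer (real m) k / y^(m + k)"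

definition drift_derivs :: "nat \<Rightarrow> real \<Rightarrow> real" where
  "drift_derivs k y = (if k = 0 then y/2 else if k = 1 then 1/2 else 0) - 2 * inv_pow_derivs 1 k y"

text \<open>The derivatives of the right-hand side of \<open>f'' = (y/2 - 2/y) f' + sin (2 f) / y\<^sup>2\<close>.\<close>

definition ode_rhs_derivs :: "(nat \<Rightarrow> real \<Rightarrow> real) \<Rightarrow> nat \<Rightarrow> real \<Rightarrow> real" where
  "ode_rhs_derivs D n y = leibniz_prod drift_derivs (\<lambda>k. D (k + 1)) n y
     + leibniz_prod (inv_pow_derivs 2) (sin_cos_derivs D True) n y"

lemma DERIV_const_divide_power:
  assumes "y > (0::real)"
  shows "((\<lambda>y. c / y^n) has_real_derivative - c * real n / y^Suc n) (at y)"
proof -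
  have "((\<lambda>y. c / y^n) has_real_derivative (0 * y^n - c * (real n * y^(n - 1))) / (y^n * y^n)) (at y)"
    using assms by (auto intro!: derivative_eq_intros)
  moreover have "(0 * y^n - c * (real n * y^(n - 1))) / (y^n * y^n) = - c * real n / y^Suc n"
    using assms by (cases n) (simp_all add: field_simps)
  ultimately show ?thesis by simp
qed

lemma DERIV_inv_pow_derivs:
  assumes "y > 0"
  shows "(inv_pow_derivs m k has_real_derivative inv_pow_derivs m (Suc k) y) (at y)"
  using DERIV_const_divide_power[OF assms, of "(-1)^k * pochhammer (real m) k" "m + k"]
  by (simp add: inv_pow_derivs_def[abs_def] pochhammer_Suc algebra_simps)

lemma DERIV_drift_derivs:
  assumes "y > 0"
  shows "(drift_derivs k has_real_derivative drift_derivs (Suc k) y) (at y)"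
proof -
  have "((\<lambda>y. if k = 0 then y/2 else if k = 1 then 1/2 else 0) has_real_derivative
      (if k = 0 then 1/2 else 0)) (at y)"
    by (auto intro!: derivative_eq_intros)
  from DERIV_diff[OF this DERIV_cmult[OF DERIV_inv_pow_derivs[OF assms], of 2]]
  show ?thesis
    by (simp add: drift_derivs_def[abs_def])
qed

lemma decays_inv_pow_derivs: "decays (inv_pow_derivs m k) (m + k)"
  unfolding decays_def inv_pow_derivs_def
  by (intro exI[of _ "\<bar>pochhammer (real m) k\<bar>"]) (auto simp: abs_mult)

lemma decays_drift_derivs:
  assumes "l \<ge> 1"
  shows "decays (drift_derivs l) (l - 1)"
proof -
  have "decays (\<lambda>y. if l = 1 then 1/2 else 0) (l - 1)"
    unfolding decays_def by (intro exI[of _ "1/2"]) auto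
  moreover have "decays (\<lambda>y. (-2) * inv_pow_derivs 1 l y) (l - 1)"
    by (intro decays_cmult decays_mono[OF decays_inv_pow_derivs]) simp
  ultimately have "decays (\<lambda>y. (if l = 1 then 1/2 else 0) + (-2) * inv_pow_derivs 1 l y) (l - 1)"
    by (rule decays_add)
  moreover have "drift_derivs l = (\<lambda>y. (if l = 1 then 1/2 else 0) + (-2) * inv_pow_derivs 1 l y)"
    using assms by (auto simp: drift_derivs_def)
  ultimately show ?thesis by simp
qed

lemma DERIV_ode_rhs_derivs:
  assumes "y > 0" and dD: "\<And>k. (D k has_real_derivative D (Suc k) y) (at y)"
  shows "(ode_rhs_derivs D n has_real_derivative ode_rhs_derivs D (Suc n) y) (at y)"
proof -
  have drift: "(leibniz_prod drift_derivs (\<lambda>k. D (k + 1)) n has_real_derivative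
      leibniz_prod drift_derivs (\<lambda>k. D (k + 1)) (Suc n) y) (at y)"
    using DERIV_leibniz_prod[of n drift_derivs y UNIV "\<lambda>k. D (k + 1)"]
      DERIV_drift_derivs[OF assms(1)] dD
    by simp
  have inv_sq: "(leibniz_prod (inv_pow_derivs 2) (sin_cos_derivs D True) n has_real_derivative
      leibniz_prod (inv_pow_derivs 2) (sin_cos_derivs D True) (Suc n) y) (at y)"
    by (intro DERIV_leibniz_prod DERIV_inv_pow_derivs DERIV_sin_cos_derivs assms)
  show ?thesis
    using DERIV_add[OF drift inv_sq] by (simp add: ode_rhs_derivs_def[abs_def])
qed

lemma derivs_eq_ode_rhs_derivs:
  assumes smooth: "smooth_derivs_halfline D" and D0: "D 0 = f"
    and ode: "\<And>y. y > 0 \<Longrightarrow> D 2 y + (2 / y - y / 2) * D 1 y - sin (2 * f y) / y ^ 2 = 0"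
    and "y > 0"
  shows "D (n + 2) y = ode_rhs_derivs D n y"
proof -
  define G where "G n y = D (n + 2) y - ode_rhs_derivs D n y" for n y
  have "G n y = 0"
  proof (rule derivative_sequence_vanishes[of "{0<..}" G])
    show "(G k has_real_derivative G (Suc k) x) (at x)" if "x \<in> {0<..}" for k x
    proof -
      have x: "x > 0" using that by simp
      have dD: "\<And>k. (D k has_real_derivative D (Suc k) x) (at x)"
        by (rule smooth_derivs_halfline_DERIV_at[OF smooth x])
      show ?thesis
        using DERIV_diff[OF dD[of "k + 2"] DERIV_ode_rhs_derivs[of x D k, OF x dD]]
        by (simp add: G_def[abs_def])
    qed
    show "G 0 x = 0" if "x \<in> {0<..}" for x
      using ode[of x] D0 that
      by (simp add: G_def ode_rhs_derivs_def leibniz_prod_def drift_derivs_def inv_pow_derivs_def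
          algebra_simps numeral_2_eq_2)
  qed (use assms in auto)
  then show ?thesis by (simp add: G_def)
qed

lemma decays_sin_cos_derivs:
  assumes D: "\<And>k. 1 \<le> k \<Longrightarrow> k \<le> n \<Longrightarrow> decays (D k) (k + 2)"
  shows "i \<le> n \<Longrightarrow> decays (sin_cos_derivs D b i) i"
proof (induction i arbitrary: b rule: less_induct)
  case (less i)
  show ?case
  proof (cases i)
    case 0
    show ?thesis
      unfolding 0 decays_def by (intro exI[of _ 1]) auto
  next
    case (Suc j)
    have "decays (leibniz_prod (\<lambda>l. D (Suc l)) (sin_cos_derivs D (\<not> b)) j) (Suc j)"
      by (rule decays_leibniz_prod[where a = "\<lambda>l. Suc l + 2" and b = "\<lambda>l. j - l"])
         (use D less Suc in auto)
    from decays_cmult[OF this] show ?thesis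
      unfolding Suc sin_cos_derivs_Suc_eq .
  qed
qed

lemma ode_rhs_derivs_remainder_decays:
  assumes D: "\<And>k. 1 \<le> k \<Longrightarrow> k \<le> n \<Longrightarrow> decays (D k) (k + 2)"
  shows "decays (\<lambda>y. ode_rhs_derivs D n y - (y/2 - 2/y) * D (n + 1) y) (n + 2)"
proof -
  have remainder: "ode_rhs_derivs D n y - (y/2 - 2/y) * D (n + 1) y
      = (\<Sum>l\<in>{1..n}. of_nat (n choose l) * drift_derivs l y * D (n - l + 1) y)
        + leibniz_prod (inv_pow_derivs 2) (sin_cos_derivs D True) n y" for y
    by (simp add: ode_rhs_derivs_def leibniz_prod_def atMost_atLeast0 sum.atLeast_Suc_atMost
        drift_derivs_def inv_pow_derivs_def algebra_simps)
  have drift: "decays (\<lambda>y. of_nat (n choose l) * drift_derivs l y * D (n - l + 1) y) (n + 2)"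
    if "l \<in> {1..n}" for l
  proof -
    have "decays (\<lambda>y. drift_derivs l y * D (n - l + 1) y) ((l - 1) + (n - l + 1 + 2))"
      using that by (intro decays_mult decays_drift_derivs D) auto
    then have "decays (\<lambda>y. drift_derivs l y * D (n - l + 1) y) (n + 2)"
      by (rule decays_mono) (use that in auto)
    from decays_cmult[OF this] show ?thesis by (simp add: mult.assoc)
  qed
  have inv_sq: "decays (leibniz_prod (inv_pow_derivs 2) (sin_cos_derivs D True) n) (n + 2)"
  proof (rule decays_leibniz_prod[where a = "\<lambda>l. 2 + l" and b = "\<lambda>l. n - l"])
    fix l assume "l \<le> n"
    show "decays (inv_pow_derivs 2 l) (2 + l)"
      by (rule decays_inv_pow_derivs)
    show "decays (sin_cos_derivs D True (n - l)) (n - l)"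
      using decays_sin_cos_derivs[of n D, OF D] by simp
    show "n + 2 \<le> 2 + l + (n - l)"
      using \<open>l \<le> n\<close> by simp
  qed
  show ?thesis
    unfolding remainder by (intro decays_add decays_sum drift inv_sq) auto
qed


subsection \<open>A comparison argument for \<open>g' = (y/2 - 2/y) g + r\<close>\<close>

lemma sq_mult_exp_neg_sq_less: "x^2 * exp (-(x^2/4)) < (4::real)"
proof -
  have "x^2 < 4 * exp (x^2/4)"
    using exp_ge_add_one_self[of "x^2/4"] by linarith
  then show ?thesis
    by (simp add: exp_minus field_simps)
qed

lemma DERIV_exp_neg_sq_div_power:
  assumes "x > (0::real)"
  shows "((\<lambda>y. exp (-(y^2/4)) / y^m) has_real_derivative
     - (x/2) * exp (-(x^2/4)) / x^m - real m * exp (-(x^2/4)) / x^Suc m) (at x)"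
proof -
  have "((\<lambda>y. exp (-(y^2/4)) / y^m) has_real_derivative
     ((exp (-(x^2/4)) * (- (2 * x / 4))) * x^m - exp (-(x^2/4)) * (real m * x^(m - 1)))
       / (x^m * x^m)) (at x)"
    using assms by (auto intro!: derivative_eq_intros simp: power2_eq_square)
  moreover have "((exp (-(x^2/4)) * (- (2 * x / 4))) * x^m - exp (-(x^2/4)) * (real m * x^(m - 1)))
       / (x^m * x^m)
     = - (x/2) * exp (-(x^2/4)) / x^m - real m * exp (-(x^2/4)) / x^Suc m"
    using assms by (cases m) (simp_all add: field_simps)
  ultimately show ?thesis by simp
qed

lemma antiderivative_unbounded:
  fixes G g :: "real \<Rightarrow> real"
  assumes "c > 0"
    and dG: "\<And>x. x \<ge> a \<Longrightarrow> (G has_real_derivative g x) (at x)"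
    and gc: "\<And>x. x \<ge> a \<Longrightarrow> g x \<ge> c"
  shows "\<exists>x\<ge>Y. G x > B"
proof -
  define a' where "a' = max a Y"
  define x where "x = a' + (\<bar>B - G a'\<bar> + 1) / c"
  have "a' \<le> x" using \<open>c > 0\<close> by (simp add: x_def)
  then have "G a' - c * a' \<le> G x - c * x"
  proof (rule DERIV_nonneg_imp_nondecreasing)
    fix t assume "a' \<le> t"
    then have "t \<ge> a" by (simp add: a'_def)
    then show "\<exists>d. ((\<lambda>x. G x - c * x) has_real_derivative d) (at t) \<and> d \<ge> 0"
      using gc by (intro exI[of _ "g t - c"]) (auto intro!: derivative_eq_intros dG)
  qed
  also have "G x - c * x = G x - c * a' - (\<bar>B - G a'\<bar> + 1)"
    using \<open>c > 0\<close> by (simp add: x_def field_simps)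
  finally have "G x > B" by linarith
  moreover have "x \<ge> Y" using \<open>a' \<le> x\<close> by (simp add: a'_def)
  ultimately show ?thesis by blast
qed

lemma integrating_factor_nondecreasing:
  fixes g r :: "real \<Rightarrow> real"
  assumes dg: "\<And>y. y \<ge> 1 \<Longrightarrow> (g has_real_derivative (y/2 - 2/y) * g y + r y) (at y)"
    and rb: "\<And>y. y \<ge> 1 \<Longrightarrow> r y \<ge> - M / y^Suc m"
    and "M \<ge> 0" and "1 \<le> y" and "y \<le> z"
  shows "y^2 * exp (-(y^2/4)) * g y - 2*M * (exp (-(y^2/4)) / y^m)
       \<le> z^2 * exp (-(z^2/4)) * g z - 2*M * (exp (-(z^2/4)) / z^m)"
proof -
  define E where "E x = exp (-(x^2/4))" for x :: real
  define h' where "h' x = x^2 * E x * r x + M * x * E x / x^m + 2*M*real m*E x / x^Suc m" for x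
  have dh: "((\<lambda>x. x^2 * E x * g x - 2*M * (E x / x^m)) has_real_derivative h' x) (at x)"
    if x: "x \<ge> 1" for x
  proof -
    have d1: "((\<lambda>x. x^2 * E x) has_real_derivative 2*x*E x + x^2 * (E x * (-(2*x/4)))) (at x)"
      unfolding E_def by (auto intro!: derivative_eq_intros simp: power2_eq_square)
    have d2: "((\<lambda>x. 2*M * (E x / x^m)) has_real_derivative
        2*M*(- (x/2) * E x / x^m - real m * E x / x^Suc m)) (at x)"
      unfolding E_def using x by (intro DERIV_cmult DERIV_exp_neg_sq_div_power) simp
    show ?thesis
      by (rule DERIV_cong[OF DERIV_diff[OF DERIV_mult[OF d1 dg[OF x]] d2]])
         (use x in \<open>simp add: h'_def field_simps power2_eq_square\<close>)
  qed
  have "h' x \<ge> 0" if x: "x \<ge> 1" for x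
  proof -
    have "x^2 * E x * r x \<ge> x^2 * E x * (- M / x^Suc m)"
      using rb[OF x] by (intro mult_left_mono) (auto simp: E_def)
    also have "x^2 * E x * (- M / x^Suc m) = - (M * x * E x / x^m)"
      using x by (simp add: field_simps power2_eq_square)
    finally show ?thesis
      using \<open>M \<ge> 0\<close> x by (simp add: h'_def E_def)
  qed
  then show ?thesis
    using \<open>1 \<le> y\<close> \<open>y \<le> z\<close> dh unfolding E_def[symmetric]
    by (intro DERIV_nonneg_imp_nondecreasing[OF \<open>y \<le> z\<close>]) (meson order_trans)
qed

lemma linear_ode_upper_bound:
  fixes g r G :: "real \<Rightarrow> real"
  assumes dg: "\<And>y. y \<ge> 1 \<Longrightarrow> (g has_real_derivative (y/2 - 2/y) * g y + r y) (at y)"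
    and dG: "\<And>y. y \<ge> 1 \<Longrightarrow> (G has_real_derivative g y) (at y)"
    and rb: "\<And>y. y \<ge> 1 \<Longrightarrow> r y \<ge> - M / y^Suc m"
    and Gb: "\<And>y. y \<ge> Y \<Longrightarrow> G y \<le> B"
    and "M \<ge> 0" and "y \<ge> 1"
  shows "g y \<le> 2*M / y^Suc (Suc m)"
proof (rule ccontr)
  define w where "w x = x^2 * exp (-(x^2/4))" for x :: real
  define \<delta> where "\<delta> = w y * g y - 2*M * (exp (-(y^2/4)) / y^m)"
  assume "\<not> ?thesis"
  then have "w y * g y > w y * (2*M / y^Suc (Suc m))"
    using \<open>y \<ge> 1\<close> by (intro mult_strict_left_mono) (auto simp: w_def)
  also have "w y * (2*M / y^Suc (Suc m)) = 2*M * (exp (-(y^2/4)) / y^m)"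
    using \<open>y \<ge> 1\<close> by (simp add: w_def field_simps power2_eq_square)
  finally have "\<delta> > 0" by (simp add: \<delta>_def)
  have "g z \<ge> \<delta>/4" if "z \<ge> y" for z
  proof -
    have "\<delta> \<le> w z * g z - 2*M * (exp (-(z^2/4)) / z^m)"
      using integrating_factor_nondecreasing[OF dg rb \<open>M \<ge> 0\<close> \<open>y \<ge> 1\<close> that]
      by (simp add: \<delta>_def w_def)
    moreover have "2*M * (exp (-(z^2/4)) / z^m) \<ge> 0"
      using \<open>M \<ge> 0\<close> \<open>y \<ge> 1\<close> that by simp
    ultimately have wg: "\<delta> \<le> w z * g z" by linarith
    have w: "0 < w z" "w z < 4"
      using \<open>y \<ge> 1\<close> that sq_mult_exp_neg_sq_less[of z] by (auto simp: w_def)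
    have "0 < w z * g z"
      using wg \<open>\<delta> > 0\<close> by linarith
    then have "g z > 0"
      using w(1) zero_less_mult_pos by blast
    then have "w z * g z \<le> 4 * g z"
      using w by (intro mult_right_mono) auto
    then show ?thesis using wg by linarith
  qed
  moreover have "\<And>x. x \<ge> y \<Longrightarrow> (G has_real_derivative g x) (at x)"
    using dG \<open>y \<ge> 1\<close> by simp
  ultimately obtain x where "x \<ge> Y" "G x > B"
    using antiderivative_unbounded[of "\<delta>/4" y G g Y B] \<open>\<delta> > 0\<close> by auto
  then show False using Gb by force
qed

lemma linear_ode_solution_decays:
  fixes g r G :: "real \<Rightarrow> real"
  assumes dg: "\<And>y. y \<ge> 1 \<Longrightarrow> (g has_real_derivative (y/2 - 2/y) * g y + r y) (at y)"
    and dG: "\<And>y. y \<ge> 1 \<Longrightarrow> (G has_real_derivative g y) (at y)"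
    and "decays r (Suc m)"
    and "\<exists>Y B. \<forall>y\<ge>Y. \<bar>G y\<bar> \<le> B"
  shows "decays g (Suc (Suc m))"
proof -
  obtain M where M: "M \<ge> 0" and rb: "\<And>y. y \<ge> 1 \<Longrightarrow> \<bar>r y\<bar> \<le> M / y^Suc m"
    using \<open>decays r (Suc m)\<close> by (metis decaysE)
  obtain Y B where Gb: "\<And>y. y \<ge> Y \<Longrightarrow> \<bar>G y\<bar> \<le> B"
    using \<open>\<exists>Y B. \<forall>y\<ge>Y. \<bar>G y\<bar> \<le> B\<close> by blast
  have "g y \<le> 2*M / y^Suc (Suc m)" if y: "y \<ge> 1" for y
    by (rule linear_ode_upper_bound[where Y = Y and B = B, OF dg dG _ _ M y])
       (use rb Gb in \<open>force simp: abs_le_iff\<close>)+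
  moreover have "- g y \<le> 2*M / y^Suc (Suc m)" if y: "y \<ge> 1" for y
  proof (rule linear_ode_upper_bound[where r = "\<lambda>y. - r y" and G = "\<lambda>y. - G y" and Y = Y and B = B,
        OF _ _ _ _ M y])
    fix x :: real assume x: "x \<ge> 1"
    show "((\<lambda>y. - g y) has_real_derivative (x/2 - 2/x) * - g x + - r x) (at x)"
      using DERIV_minus[OF dg[OF x]] by (simp add: algebra_simps)
    show "((\<lambda>y. - G y) has_real_derivative - g x) (at x)"
      using DERIV_minus[OF dG[OF x]] .
    show "- M / x^Suc m \<le> - r x"
      using rb[OF x] by (simp add: abs_le_iff)
  next
    fix x :: real assume "x \<ge> Y"
    then show "- G x \<le> B" using Gb by (force simp: abs_le_iff)
  qed
  ultimately show ?thesis
    unfolding decays_def by (intro exI[of _ "2*M"]) (simp add: abs_le_iff)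
qed


lemma tendsto_at_top_imp_bounded:
  fixes f :: "real \<Rightarrow> real"
  assumes "(f \<longlongrightarrow> L) at_top"
  shows "\<exists>Y B. \<forall>y\<ge>Y. \<bar>f y\<bar> \<le> B"
proof -
  have "\<forall>\<^sub>F y in at_top. dist (f y) L < 1"
    using tendstoD[OF assms, of 1] by simp
  then obtain Y where "\<And>y. y \<ge> Y \<Longrightarrow> dist (f y) L < 1"
    by (auto simp: eventually_at_top_linorder)
  then have "\<forall>y\<ge>Y. \<bar>f y\<bar> \<le> \<bar>L\<bar> + 1"
    by (force simp: dist_real_def)
  then show ?thesis by blast
qed

lemma derivs_decay:
  assumes smooth: "smooth_derivs_halfline D" and D0: "D 0 = f"
    and ode: "\<And>y. y > 0 \<Longrightarrow> D 2 y + (2 / y - y / 2) * D 1 y - sin (2 * f y) / y ^ 2 = 0"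
    and lim: "\<exists>L. (f \<longlongrightarrow> L) at_top"
  shows "k \<ge> 1 \<Longrightarrow> decays (D k) (k + 2)"
proof (induction k rule: less_induct)
  case (less k)
  then obtain n where k: "k = Suc n" by (cases k) auto
  have lower: "\<And>j. 1 \<le> j \<Longrightarrow> j \<le> n \<Longrightarrow> decays (D j) (j + 2)"
    using less.IH k by simp
  define r where "r y = ode_rhs_derivs D n y - (y/2 - 2/y) * D (n + 1) y" for y
  have dg: "(D (Suc n) has_real_derivative (y/2 - 2/y) * D (Suc n) y + r y) (at y)"
    if "y \<ge> 1" for y
    using smooth_derivs_halfline_DERIV_at[OF smooth, of y "Suc n"]
      derivs_eq_ode_rhs_derivs[OF smooth D0 ode, of y n] that
    by (simp add: r_def)
  have dG: "(D n has_real_derivative D (Suc n) y) (at y)" if "y \<ge> 1" for y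
    using smooth_derivs_halfline_DERIV_at[OF smooth] that by simp
  have "decays r (Suc (Suc n))"
    unfolding r_def[abs_def] using ode_rhs_derivs_remainder_decays[of n D, OF lower] by simp
  moreover have "\<exists>Y B. \<forall>y\<ge>Y. \<bar>D n y\<bar> \<le> B"
  proof (cases "n = 0")
    case True
    then show ?thesis
      using lim D0 tendsto_at_top_imp_bounded by auto
  next
    case False
    then show ?thesis
      using decays_imp_bounded[OF lower[of n]] by auto
  qed
  ultimately show ?case
    using linear_ode_solution_decays[OF dg dG] k by simp
qed


theorem proposition1:
  fixes f :: "real \<Rightarrow> real" and D :: "nat \<Rightarrow> real \<Rightarrow> real"
  assumes smooth: "smooth_derivs_halfline D" and D0: "D 0 = f"
    and ode: "\<And>y. y > 0 \<Longrightarrow>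
      D 2 y + (2 / y - y / 2) * D 1 y - sin (2 * f y) / y ^ 2 = 0"
    and init: "f 0 = 0"
    and lim: "\<exists>L. (f \<longlongrightarrow> L) at_top"
  shows "(\<forall>k. D (2 * k) 0 = 0) \<and>
         (\<forall>k\<ge>1. \<exists>C>0. \<forall>y\<ge>1. \<bar>D k y\<bar> \<le> C * y powr (- (2 + real k)))"
proof (intro conjI allI impI)
  fix k :: nat
  show "D (2 * k) 0 = 0"
    using even_derivs_at_0_vanish[OF smooth D0 ode init, of "2 * k"] by simp
next
  fix k :: nat
  assume "k \<ge> 1"
  then have "decays (D k) (k + 2)"
    using derivs_decay[OF smooth D0 ode lim] by blast
  from decays_imp_powr_bound[OF this]
  show "\<exists>C>0. \<forall>y\<ge>1. \<bar>D k y\<bar> \<le> C * y powr (- (2 + real k))"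
    by (simp add: add.commute)
qed

end
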